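(* The approximation ratio $\frac{13}{15}$ of the $\alpha$-pass algorithm for the clique inference problem with nonnegative vertex potentials and Potts clique potential $C(\mathbf{v})=\lambda\sum_{v}n_v(\mathbf{v})^2$, $\lambda>0$, is tight: there is a family of such instances (with $\lambda=1$, indexed by the number of vertices $n$) for which the ratio $F(\hat{\mathbf{v}})/F(\mathbf{v}^* )$ between the score of the assignment $\hat{\mathbf{v}}$ returned by $\alpha$-pass and the optimal score tends to $\frac{13}{15}$ as $n\to\infty$.
   Context: Clique inference problem: there are $n$ vertices $1,\dots,n$, a finite set $V$ of values, real vertex potentials $\psi_{jv}$ ($1\le j\le n$, $v\in V$), and a clique potential $C$ depending only on the counts $n_v(\mathbf{v})=|\{j:v_j=v\}|$. The objective is $F(\mathbf{v})=\sum_{j=1}^n\psi_{jv_j}+C(\mathbf{v})$ over $\mathbf{v}\in V^n$; $\mathbf{v}^*$ is a maximizer. The $\alpha$-pass algorithm: for each $\alpha\in V$, sort the vertices in decreasing order of $\psi_{j\alpha}-\max_{v\neq\alpha}\psi_{jv}$; for each $k\in\{1,\dots,n\}$ form the assignment giving the first $k$ sorted vertices the value $\alpha$ and every other vertex a value $v\ne\alpha$ maximizing $\psi_{jv}$; output the formed assignment with the largest $F$ over all $\alpha$ and $k$. *)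

theory Defs
  imports Complex_Main "HOL-Library.FuncSet"
begin

definition cnt :: "nat \<Rightarrow> (nat \<Rightarrow> nat) \<Rightarrow> nat \<Rightarrow> nat" where
  "cnt n x v = card {j \<in> {0..<n}. x j = v}"

definition score :: "nat \<Rightarrow> nat set \<Rightarrow> (nat \<Rightarrow> nat \<Rightarrow> real) \<Rightarrow> real \<Rightarrow> (nat \<Rightarrow> nat) \<Rightarrow> real" where
  "score n V psi lam x = (\<Sum>j<n. psi j (x j)) + lam * (\<Sum>v\<in>V. (real (cnt n x v))^2)"

definition opt :: "nat \<Rightarrow> nat set \<Rightarrow> (nat \<Rightarrow> nat \<Rightarrow> real) \<Rightarrow> real \<Rightarrow> real" where
  "opt n V psi lam = Max (score n V psi lam ` ({0..<n} \<rightarrow>\<^sub>E V))"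

definition akey :: "nat set \<Rightarrow> (nat \<Rightarrow> nat \<Rightarrow> real) \<Rightarrow> nat \<Rightarrow> nat \<Rightarrow> real" where
  "akey V psi a j = psi j a - Max (psi j ` (V - {a}))"

text \<open>A valid run of the alpha-pass for value a: sig i is the vertex at position i of a
sorting in decreasing order of the key (ties broken arbitrarily), and b j is a value
v /= a maximizing psi j v (ties broken arbitrarily).\<close>
definition valid_run :: "nat \<Rightarrow> nat set \<Rightarrow> (nat \<Rightarrow> nat \<Rightarrow> real) \<Rightarrow> nat \<Rightarrow> (nat \<Rightarrow> nat) \<Rightarrow> (nat \<Rightarrow> nat) \<Rightarrow> bool" where
  "valid_run n V psi a sig b \<longleftrightarrow>
     bij_betw sig {0..<n} {0..<n} \<and>
     (\<forall>i i'. i \<le> i' \<and> i' < n \<longrightarrow> akey V psi a (sig i') \<le> akey V psi a (sig i)) \<and>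
     (\<forall>j<n. b j \<in> V - {a} \<and> psi j (b j) = Max (psi j ` (V - {a})))"

definition formed :: "nat \<Rightarrow> (nat \<Rightarrow> nat) \<Rightarrow> (nat \<Rightarrow> nat) \<Rightarrow> nat \<Rightarrow> (nat \<Rightarrow> nat)" where
  "formed a sig b k = (\<lambda>j. if j \<in> sig ` {0..<k} then a else b j)"

definition candidates :: "nat \<Rightarrow> nat set \<Rightarrow> (nat \<Rightarrow> nat \<Rightarrow> nat) \<Rightarrow> (nat \<Rightarrow> nat \<Rightarrow> nat) \<Rightarrow> (nat \<Rightarrow> nat) set" where
  "candidates n V sigs bs = {formed a (sigs a) (bs a) k | a k. a \<in> V \<and> k \<in> {1..n}}"

definition alpha_pass_output :: "nat \<Rightarrow> nat set \<Rightarrow> (nat \<Rightarrow> nat \<Rightarrow> real) \<Rightarrow> real \<Rightarrow> (nat \<Rightarrow> nat) \<Rightarrow> bool" where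
  "alpha_pass_output n V psi lam x \<longleftrightarrow>
     (\<exists>sigs bs. (\<forall>a\<in>V. valid_run n V psi a (sigs a) (bs a)) \<and>
        x \<in> candidates n V sigs bs \<and>
        (\<forall>y \<in> candidates n V sigs bs. score n V psi lam y \<le> score n V psi lam x))"

end

theory Submission
  imports Defs "HOL-Analysis.Convex" "HOL-Analysis.Elementary_Normed_Spaces"
begin

text \<open>
  Vertex \<open>j\<close> of the tight instance has a private value \<open>j + 3\<close> of potential \<open>4n/3 + 1\<close> and
  a shared value \<open>j mod 3\<close> of potential \<open>4n/3\<close>; all other potentials vanish. For every
  \<open>\<alpha>\<close>, the best value other than \<open>\<alpha>\<close> is the private one (or, for the single vertex
  owning \<open>\<alpha>\<close>, the shared one), so every candidate of the \<open>\<alpha>\<close>-pass puts \<open>k\<close> vertices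
  on \<open>\<alpha>\<close> and the others on pairwise distinct values. Its score is at most
  \<open>13n\<^sup>2/9 + O(n)\<close>, and the candidate \<open>\<alpha> = 0, k = n\<close> attains \<open>13n\<^sup>2/9 - O(n)\<close>.
  Spreading the vertices over their shared values scores \<open>4n\<^sup>2/3 + n\<^sup>2/3 = 5n\<^sup>2/3\<close>, and no
  assignment does better than \<open>5n\<^sup>2/3 + O(n)\<close>: if the largest class has \<open>m\<close> vertices, the
  Potts term is at most \<open>mn\<close> and that class collects potential at most
  \<open>(4n/3 + 1) min(m, (n + 2)/3)\<close>.
\<close>

lemma mult_add_less_iff_less_div:
  fixes d i t n :: nat
  assumes "i < d"
  shows "d * t + i < n \<longleftrightarrow> t < (n + d - 1 - i) div d"
proof -
  have "t < (n + d - 1 - i) div d \<longleftrightarrow> Suc t * d \<le> n + d - 1 - i"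
    using assms by (simp add: Suc_le_eq[symmetric] less_eq_div_iff_mult_less_eq del: mult_Suc)
  also have "\<dots> \<longleftrightarrow> d * t + i < n"
    using assms by (auto simp: algebra_simps)
  finally show ?thesis by simp
qed

lemma card_residue_class:
  fixes d i n :: nat
  assumes "i < d"
  shows "card {j \<in> {0..<n}. j mod d = i} = (n + d - 1 - i) div d"
proof -
  have "{j \<in> {0..<n}. j mod d = i} = (\<lambda>t. d * t + i) ` {..<(n + d - 1 - i) div d}"
  proof (intro set_eqI iffI)
    fix j assume j: "j \<in> {j \<in> {0..<n}. j mod d = i}"
    then have j_eq: "j = d * (j div d) + i"
      using mult_div_mod_eq[of d j] by simp
    with j have "j div d < (n + d - 1 - i) div d"
      using mult_add_less_iff_less_div[OF assms, of "j div d" n] by simp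
    with j_eq show "j \<in> (\<lambda>t. d * t + i) ` {..<(n + d - 1 - i) div d}"
      by blast
  next
    fix j assume "j \<in> (\<lambda>t. d * t + i) ` {..<(n + d - 1 - i) div d}"
    then obtain t where "t < (n + d - 1 - i) div d" "j = d * t + i"
      by blast
    then show "j \<in> {j \<in> {0..<n}. j mod d = i}"
      using mult_add_less_iff_less_div[OF assms, of t n] assms by simp
  qed
  moreover have "inj_on (\<lambda>t. d * t + i) {..<(n + d - 1 - i) div d}"
    using assms by (intro inj_onI) simp
  ultimately show ?thesis
    by (simp add: card_image)
qed

lemma sum_cnt:
  assumes "finite V" "\<forall>j<n. x j \<in> V"
  shows "(\<Sum>v\<in>V. cnt n x v) = n"
proof -
  have "(\<Sum>v\<in>V. cnt n x v) = card (\<Union>v\<in>V. {j \<in> {0..<n}. x j = v})"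
    unfolding cnt_def by (rule card_UN_disjoint[symmetric]) (use assms in auto)
  also have "(\<Union>v\<in>V. {j \<in> {0..<n}. x j = v}) = {0..<n}"
    using assms by auto
  finally show ?thesis by simp
qed

lemma sum_cnt_sq_le:
  assumes V: "finite V" "\<forall>j<n. x j \<in> V" and a: "a \<in> V"
    and M: "\<And>v. v \<in> V - {a} \<Longrightarrow> cnt n x v \<le> M"
  shows "(\<Sum>v\<in>V. real (cnt n x v)^2) \<le> real (cnt n x a)^2 + real M * (real n - real (cnt n x a))"
proof -
  have rest: "(\<Sum>v\<in>V - {a}. real (cnt n x v)) = real n - real (cnt n x a)"
    using sum.remove[OF V(1) a, of "\<lambda>v. real (cnt n x v)"] sum_cnt[OF V] by (simp flip: of_nat_sum)
  have "(\<Sum>v\<in>V - {a}. real (cnt n x v)^2) \<le> (\<Sum>v\<in>V - {a}. real M * real (cnt n x v))"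
    by (rule sum_mono) (simp add: power2_eq_square M mult_right_mono)
  also have "\<dots> = real M * (real n - real (cnt n x a))"
    by (simp add: rest flip: sum_distrib_left)
  finally show ?thesis
    using sum.remove[OF V(1) a, of "\<lambda>v. real (cnt n x v)^2"] by simp
qed

lemma cnt_formed_chosen:
  assumes "bij_betw sig {0..<n} {0..<n}" "\<forall>j<n. b j \<noteq> a" "k \<le> n"
  shows "cnt n (formed a sig b k) a = k"
proof -
  have sub: "{0..<k} \<subseteq> {0..<n}"
    using assms(3) by auto
  then have "sig ` {0..<k} \<subseteq> {0..<n}"
    using bij_betw_imp_surj_on[OF assms(1)] by blast
  then have "{j \<in> {0..<n}. formed a sig b k j = a} = sig ` {0..<k}"
    using assms(2) by (auto simp: formed_def)
  moreover have "inj_on sig {0..<k}"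
    using inj_on_subset[OF bij_betw_imp_inj_on[OF assms(1)] sub] .
  ultimately show ?thesis
    by (simp add: cnt_def card_image)
qed

lemma cnt_formed_other_le_1:
  assumes "inj_on b {0..<n}" "v \<noteq> a"
  shows "cnt n (formed a sig b k) v \<le> 1"
proof -
  have "{j \<in> {0..<n}. formed a sig b k j = v} \<subseteq> {j \<in> {0..<n}. b j = v}"
    using assms(2) by (auto simp: formed_def)
  then have "cnt n (formed a sig b k) v \<le> card {j \<in> {0..<n}. b j = v}"
    unfolding cnt_def by (intro card_mono) auto
  moreover have "card {j \<in> {0..<n}. b j = v} \<le> 1"
    using assms(1) by (auto simp: card_le_Suc0_iff_eq inj_on_def)
  ultimately show ?thesis
    by linarith
qed

lemma sum_potential_formed:
  assumes "sig ` {0..<k} \<subseteq> {..<n}"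
  shows "(\<Sum>j<n. psi j (formed a sig b k j)) =
    (\<Sum>j\<in>sig ` {0..<k}. psi j a) + (\<Sum>j\<in>{..<n} - sig ` {0..<k}. psi j (b j))"
proof -
  have "(\<Sum>j\<in>{..<n} - sig ` {0..<k}. psi j (formed a sig b k j)) = (\<Sum>j\<in>{..<n} - sig ` {0..<k}. psi j (b j))"
    by (rule sum.cong) (auto simp: formed_def)
  then show ?thesis
    unfolding sum.subset_diff[OF assms finite_lessThan] by (simp add: formed_def add.commute)
qed

lemma valid_run_exists:
  assumes "finite V" "V - {a} \<noteq> {}"
  shows "\<exists>sig b. valid_run n V psi a sig b"
proof -
  define xs where "xs = sort_key (\<lambda>j. - akey V psi a j) [0..<n]"
  have len: "length xs = n"
    by (simp add: xs_def)
  have bij: "bij_betw ((!) xs) {0..<n} {0..<n}"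
    by (rule bij_betw_nth) (simp_all add: xs_def atLeast0LessThan)
  have "sorted (map (\<lambda>j. - akey V psi a j) xs)"
    unfolding xs_def by (rule sorted_sort_key)
  then have sorted: "\<forall>i i'. i \<le> i' \<and> i' < n \<longrightarrow> akey V psi a (xs ! i') \<le> akey V psi a (xs ! i)"
    using len by (auto dest: sorted_nth_mono)
  have "\<exists>v. v \<in> V - {a} \<and> psi j v = Max (psi j ` (V - {a}))" for j
  proof -
    have "Max (psi j ` (V - {a})) \<in> psi j ` (V - {a})"
      using assms by (intro Max_in) auto
    then show ?thesis by auto
  qed
  then obtain b where "\<forall>j. b j \<in> V - {a} \<and> psi j (b j) = Max (psi j ` (V - {a}))"
    by metis
  with bij sorted show ?thesis
    unfolding valid_run_def by blast
qed

lemma alpha_pass_output_exists: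
  assumes "finite V" "2 \<le> card V" "1 \<le> n"
  shows "\<exists>x. alpha_pass_output n V psi lam x"
proof -
  have "V - {a} \<noteq> {}" for a
  proof
    assume "V - {a} = {}"
    then have "card V \<le> card {a}" by (intro card_mono) auto
    with assms(2) show False by simp
  qed
  then have "\<forall>a. \<exists>sig b. valid_run n V psi a sig b"
    using valid_run_exists[OF assms(1)] by blast
  then obtain sigs bs where runs: "\<forall>a\<in>V. valid_run n V psi a (sigs a) (bs a)"
    by metis
  define C where "C = candidates n V sigs bs"
  have "C \<subseteq> (\<lambda>(a, k). formed a (sigs a) (bs a) k) ` (V \<times> {1..n})"
    unfolding C_def candidates_def by auto
  then have fin: "finite C"
    by (rule finite_subset) (use assms(1) in simp)
  have "V \<noteq> {}"
    using assms(2) by auto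
  then obtain a where "a \<in> V"
    by blast
  then have "formed a (sigs a) (bs a) n \<in> C"
    unfolding C_def candidates_def using assms(3) by (intro CollectI exI conjI refl) auto
  then have "Max (score n V psi lam ` C) \<in> score n V psi lam ` C"
    using fin by (intro Max_in) auto
  then obtain x where "x \<in> C" "score n V psi lam x = Max (score n V psi lam ` C)"
    by auto
  with fin have "x \<in> C" "\<forall>y\<in>C. score n V psi lam y \<le> score n V psi lam x"
    by auto
  with runs show ?thesis
    unfolding alpha_pass_output_def C_def by blast
qed

lemma tendsto_div_square_of_near_quadratic:
  fixes s :: "nat \<Rightarrow> real"
  assumes "\<forall>n\<ge>1. \<bar>s n - a * real n^2\<bar> \<le> c * real n"
  shows "(\<lambda>n. s n / real n^2) \<longlonglongrightarrow> a"
proof (rule LIM_zero_cancel, rule Lim_null_comparison)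
  show "\<forall>\<^sub>F n in sequentially. norm (s n / real n^2 - a) \<le> c / real n"
  proof (rule eventually_sequentiallyI)
    fix n :: nat assume n: "1 \<le> n"
    have "norm (s n / real n^2 - a) = \<bar>s n - a * real n^2\<bar> / real n^2"
      using n by (simp add: field_simps)
    also have "\<dots> \<le> c * real n / real n^2"
      using assms n by (intro divide_right_mono) auto
    also have "\<dots> = c / real n"
      using n by (simp add: power2_eq_square)
    finally show "norm (s n / real n^2 - a) \<le> c / real n" .
  qed
  show "(\<lambda>n. c / real n) \<longlonglongrightarrow> 0"
    by (rule lim_const_over_n)
qed

lemma tendsto_ratio_of_near_quadratics:
  fixes s t :: "nat \<Rightarrow> real"
  assumes "\<forall>n\<ge>1. \<bar>s n - a * real n^2\<bar> \<le> c * real n"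
    and "\<forall>n\<ge>1. \<bar>t n - b * real n^2\<bar> \<le> d * real n" and "b \<noteq> 0"
  shows "(\<lambda>n. s n / t n) \<longlonglongrightarrow> a / b"
proof -
  have "(\<lambda>n. (s n / real n^2) / (t n / real n^2)) \<longlonglongrightarrow> a / b"
    using tendsto_div_square_of_near_quadratic[OF assms(1)] tendsto_div_square_of_near_quadratic[OF assms(2)] assms(3)
    by (rule tendsto_divide)
  moreover have "\<forall>\<^sub>F n in sequentially. (s n / real n^2) / (t n / real n^2) = s n / t n"
    by (intro eventually_sequentiallyI[of 1]) simp
  ultimately show ?thesis
    by (rule Lim_transform_eventually)
qed

definition tight_values :: "nat \<Rightarrow> nat set" where
  "tight_values n = {..<n + 3}"

definition tight_potential :: "nat \<Rightarrow> nat \<Rightarrow> nat \<Rightarrow> real" where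
  "tight_potential n j v =
     (if v = j + 3 then 4 * real n / 3 + 1 else if v = j mod 3 then 4 * real n / 3 else 0)"

lemma finite_tight_values [simp]: "finite (tight_values n)"
  by (simp add: tight_values_def)

lemma card_tight_values: "card (tight_values n) = n + 3"
  by (simp add: tight_values_def)

lemma tight_potential_nonneg: "0 \<le> tight_potential n j v"
  by (simp add: tight_potential_def)

lemma tight_potential_le: "tight_potential n j v \<le> 4 * real n / 3 + 1"
  by (simp add: tight_potential_def)

lemma card_residue_class_3_approx:
  assumes "v < 3"
  shows "\<bar>3 * real (card {j \<in> {0..<n}. j mod 3 = v}) - real n\<bar> \<le> 2"
proof -
  have "n \<le> 3 * ((n + 3 - 1 - v) div 3) + 2" "3 * ((n + 3 - 1 - v) div 3) \<le> n + 2"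
    using assms by linarith+
  then have "real n \<le> 3 * real ((n + 3 - 1 - v) div 3) + 2" "3 * real ((n + 3 - 1 - v) div 3) \<le> real n + 2"
    by (simp_all only: of_nat_le_iff[symmetric] of_nat_add of_nat_mult of_nat_numeral)
  then show ?thesis
    unfolding card_residue_class[OF assms] abs_le_iff by linarith
qed

lemma sum_tight_potential_shared:
  assumes "v < 3"
  shows "(\<Sum>j<n. tight_potential n j v) = 4 * real n / 3 * real (card {j \<in> {0..<n}. j mod 3 = v})"
proof -
  have "(\<Sum>j<n. tight_potential n j v) = (\<Sum>j\<in>{0..<n}. if j mod 3 = v then 4 * real n / 3 else 0)"
    using assms by (auto simp: tight_potential_def atLeast0LessThan intro!: sum.cong)
  also have "\<dots> = 4 * real n / 3 * real (card {j \<in> {0..<n}. j mod 3 = v})"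
    by (simp add: sum.If_cases Int_def)
  finally show ?thesis .
qed

lemma sum_tight_potential_private:
  assumes "3 \<le> v"
  shows "(\<Sum>j<n. tight_potential n j v) \<le> 4 * real n / 3 + 1"
proof -
  have "(\<Sum>j<n. tight_potential n j v) = (\<Sum>j<n. if j = v - 3 then 4 * real n / 3 + 1 else 0)"
    using assms by (intro sum.cong) (auto simp: tight_potential_def)
  then show ?thesis
    by simp
qed

lemma sum_tight_potential_le:
  assumes "1 \<le> n"
  shows "(\<Sum>j<n. tight_potential n j v) \<le> (4 * real n / 3 + 1) * ((real n + 2) / 3)"
proof (cases "v < 3")
  case True
  have "(\<Sum>j<n. tight_potential n j v) \<le> 4 * real n / 3 * ((real n + 2) / 3)"
    unfolding sum_tight_potential_shared[OF True]
    by (rule mult_left_mono) (use card_residue_class_3_approx[OF True, of n] in auto)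
  also have "\<dots> \<le> (4 * real n / 3 + 1) * ((real n + 2) / 3)"
    by (rule mult_right_mono) auto
  finally show ?thesis .
next
  case False
  then have "(\<Sum>j<n. tight_potential n j v) \<le> (4 * real n / 3 + 1) * 1"
    using sum_tight_potential_private[of v n] by simp
  also have "\<dots> \<le> (4 * real n / 3 + 1) * ((real n + 2) / 3)"
    using assms by (intro mult_left_mono) auto
  finally show ?thesis .
qed

lemma tight_run_other:
  assumes run: "valid_run n (tight_values n) (tight_potential n) a sig b" and j: "j < n"
  shows "b j = (if a = j + 3 then j mod 3 else j + 3)"
proof -
  let ?W = "tight_values n - {a}"
  have b: "b j \<in> ?W" "tight_potential n j (b j) = Max (tight_potential n j ` ?W)"
    using run j by (auto simp: valid_run_def)
  have best: "tight_potential n j v \<le> tight_potential n j (b j)" if "v \<in> ?W" for v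
    unfolding b(2) using that by (intro Max_ge) auto
  show ?thesis
  proof (cases "a = j + 3")
    case True
    have "j mod 3 \<in> ?W"
      using True by (auto simp: tight_values_def)
    then have "tight_potential n j (j mod 3) \<le> tight_potential n j (b j)"
      by (rule best)
    then show ?thesis
      using True j b(1) by (auto simp: tight_potential_def split: if_splits)
  next
    case False
    have "j + 3 \<in> ?W"
      using False j by (auto simp: tight_values_def)
    then have "tight_potential n j (j + 3) \<le> tight_potential n j (b j)"
      by (rule best)
    then show ?thesis
      using False by (auto simp: tight_potential_def split: if_splits)
  qed
qed

lemma tight_run_other_inj:
  assumes "valid_run n (tight_values n) (tight_potential n) a sig b"
  shows "inj_on b {0..<n}"
proof (rule inj_onI)
  fix i j assume "i \<in> {0..<n}" "j \<in> {0..<n}" "b i = b j"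
  then have eq: "(if a = i + 3 then i mod 3 else i + 3) = (if a = j + 3 then j mod 3 else j + 3)"
    using tight_run_other[OF assms, of i] tight_run_other[OF assms, of j] by simp
  then show "i = j"
    using mod_less_divisor[of 3 i] mod_less_divisor[of 3 j] by (simp split: if_splits)
qed

text \<open>
  In the next three inequalities \<open>N\<close> stands for \<open>n\<close>, \<open>s1\<close> and \<open>s2\<close> for the potential
  collected inside and outside the distinguished class of \<open>k\<close> (resp.\ \<open>m\<close>) vertices, and
  \<open>c\<close> for the Potts term.
\<close>

lemma candidate_score_arith_private:
  fixes N k s1 s2 c :: real
  assumes "1 \<le> k" "k \<le> N" "s1 \<le> 4*N/3+1" "s2 \<le> (N - k) * (4*N/3+1)" "c \<le> k^2 + (N - k)"
  shows "s1 + s2 + c \<le> 13/9*N^2 + 4*N + 1"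
proof -
  have "13/9*N^2 + 4*N + 1 - ((4*N/3+1) + (N - k) * (4*N/3+1) + (k^2 + (N - k)))
      = (k - 1) * (N - k) + N^2/9 + N*k/3 + 5*N/3 + k"
    by (simp add: field_simps power2_eq_square)
  moreover have "0 \<le> (k - 1) * (N - k) + N^2/9 + N*k/3 + 5*N/3 + k"
    using assms(1,2) by (intro add_nonneg_nonneg mult_nonneg_nonneg) auto
  ultimately show ?thesis
    using assms(3-5) by linarith
qed

lemma candidate_score_arith_shared:
  fixes N k g s1 s2 c :: real
  assumes "0 \<le> k" "k \<le> N" "s1 \<le> 4*N/3 * k" "s1 \<le> 4*N/3 * g" "3 * g \<le> N + 2"
     "s2 \<le> (N - k) * (4*N/3+1)" "c \<le> k^2 + (N - k)"
  shows "s1 + s2 + c \<le> 13/9*N^2 + 4*N + 1"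
proof (cases "3 * k \<le> N + 2")
  case True
  have "13/9*N^2 + 4*N + 1 - (4*N/3 * k + (N - k) * (4*N/3+1) + (k^2 + (N - k)))
      = k * (N + 2 - 3 * k) / 3 + N * (N + 2 - 3 * k) / 9 + 16*N/9 + 1 + 4*k/3"
    by (simp add: field_simps power2_eq_square)
  moreover have "0 \<le> k * (N + 2 - 3 * k) / 3 + N * (N + 2 - 3 * k) / 9 + 16*N/9 + 1 + 4*k/3"
    using True assms(1,2) by (intro add_nonneg_nonneg mult_nonneg_nonneg divide_nonneg_nonneg) auto
  ultimately show ?thesis
    using assms(3,6,7) by linarith
next
  case False
  have "4*N/3 * g \<le> 4*N/3 * ((N + 2) / 3)"
    using assms(1,2,5) by (intro mult_left_mono) auto
  moreover have "13/9*N^2 + 4*N + 1 - (4*N/3 * ((N + 2) / 3) + (N - k) * (4*N/3+1) + (k^2 + (N - k)))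
      = (3 * k - (N + 2)) * (N - k) / 3 + 16*N/9 + 4*k/3 + 1"
    by (simp add: field_simps power2_eq_square)
  moreover have "0 \<le> (3 * k - (N + 2)) * (N - k) / 3 + 16*N/9 + 4*k/3 + 1"
    using False assms(1,2) by (intro add_nonneg_nonneg mult_nonneg_nonneg divide_nonneg_nonneg) auto
  ultimately show ?thesis
    using assms(4,6,7) by linarith
qed

lemma assignment_score_arith:
  fixes N m s1 s2 c :: real
  assumes "0 \<le> m" "m \<le> N" "s1 \<le> (4*N/3+1) * m" "s1 \<le> (4*N/3+1) * ((N + 2) / 3)"
    "s2 \<le> (4*N/3+1) * (N - m)" "c \<le> m * N"
  shows "s1 + s2 + c \<le> 5/3*N^2 + 5*N + 5"
proof (cases "3 * m \<le> N")
  case True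
  have "5/3*N^2 + 5*N + 5 - ((4*N/3+1) * m + (4*N/3+1) * (N - m) + m * N) = N * (N - 3 * m) / 3 + 4*N + 5"
    by (simp add: field_simps power2_eq_square)
  moreover have "0 \<le> N * (N - 3 * m) / 3 + 4*N + 5"
    using True assms(1,2) by (intro add_nonneg_nonneg mult_nonneg_nonneg divide_nonneg_nonneg) auto
  ultimately show ?thesis
    using assms(3,5,6) by linarith
next
  case False
  have "5/3*N^2 + 5*N + 5 - ((4*N/3+1) * ((N + 2) / 3) + (4*N/3+1) * (N - m) + m * N)
      = N * (3 * m - N) / 9 + 25*N/9 + m + 13/3"
    by (simp add: field_simps power2_eq_square)
  moreover have "0 \<le> N * (3 * m - N) / 9 + 25*N/9 + m + 13/3"
    using False assms(1,2) by (intro add_nonneg_nonneg mult_nonneg_nonneg divide_nonneg_nonneg) auto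
  ultimately show ?thesis
    using assms(4,5,6) by linarith
qed

lemma sum_cnt_sq_tight_candidate_le:
  assumes run: "valid_run n (tight_values n) (tight_potential n) a sig b"
    and a: "a \<in> tight_values n" and k: "k \<le> n"
  shows "(\<Sum>v\<in>tight_values n. real (cnt n (formed a sig b k) v)^2) \<le> real k^2 + (real n - real k)"
proof -
  have other: "\<forall>j<n. b j \<in> tight_values n - {a}"
    using run by (simp add: valid_run_def)
  have bij: "bij_betw sig {0..<n} {0..<n}"
    using run by (simp add: valid_run_def)
  have "\<forall>j<n. formed a sig b k j \<in> tight_values n"
    using a other by (simp add: formed_def)
  then show ?thesis
    using sum_cnt_sq_le[of "tight_values n" n "formed a sig b k" a 1] a
      cnt_formed_chosen[OF bij _ k] cnt_formed_other_le_1[OF tight_run_other_inj[OF run]] other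
    by simp
qed

lemma score_tight_candidate_le:
  assumes run: "valid_run n (tight_values n) (tight_potential n) a sig b"
    and a: "a \<in> tight_values n" and k: "1 \<le> k" "k \<le> n"
  shows "score n (tight_values n) (tight_potential n) 1 (formed a sig b k) \<le> 13/9 * real n^2 + 4 * real n + 1"
proof -
  define S where "S = sig ` {0..<k}"
  have bij: "bij_betw sig {0..<n} {0..<n}"
    using run by (simp add: valid_run_def)
  have S: "S \<subseteq> {..<n}" "card S = k"
    using k bij_betw_imp_surj_on[OF bij] inj_on_subset[OF bij_betw_imp_inj_on[OF bij]]
    by (auto simp: S_def card_image)
  have "(\<Sum>j\<in>{..<n} - S. tight_potential n j (b j)) \<le> real (card ({..<n} - S)) * (4 * real n / 3 + 1)"
    by (rule sum_bounded_above) (rule tight_potential_le)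
  then have rest: "(\<Sum>j\<in>{..<n} - S. tight_potential n j (b j)) \<le> (real n - real k) * (4 * real n / 3 + 1)"
    using S k by (simp add: card_Diff_subset finite_subset)
  have chosen: "(\<Sum>j\<in>S. tight_potential n j a) \<le> (\<Sum>j<n. tight_potential n j a)"
    using S by (intro sum_mono2) (auto simp: tight_potential_nonneg)
  have score: "score n (tight_values n) (tight_potential n) 1 (formed a sig b k) =
      (\<Sum>j\<in>S. tight_potential n j a) + (\<Sum>j\<in>{..<n} - S. tight_potential n j (b j))
      + (\<Sum>v\<in>tight_values n. real (cnt n (formed a sig b k) v)^2)"
    unfolding score_def S_def using sum_potential_formed[OF S(1)[unfolded S_def]] by simp
  note counts = sum_cnt_sq_tight_candidate_le[OF run a k(2)]
  show ?thesis
  proof (cases "a < 3")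
    case True
    have "(\<Sum>j\<in>S. tight_potential n j a) \<le> real (card S) * (4 * real n / 3)"
      using True by (intro sum_bounded_above) (auto simp: tight_potential_def)
    moreover note chosen sum_tight_potential_shared[OF True, of n]
      card_residue_class_3_approx[OF True, of n]
    ultimately show ?thesis
      unfolding score using S(2) k rest counts
      by (intro candidate_score_arith_shared[where g = "real (card {j \<in> {0..<n}. j mod 3 = a})"])
        (auto simp: mult.commute)
  next
    case False
    then show ?thesis
      unfolding score using chosen sum_tight_potential_private[of a n] k rest counts
      by (intro candidate_score_arith_private) auto
  qed
qed

lemma score_tight_all_zero_ge:
  assumes run: "valid_run n (tight_values n) (tight_potential n) 0 sig b"
  shows "13/9 * real n^2 - real n \<le> score n (tight_values n) (tight_potential n) 1 (formed 0 sig b n)"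
proof -
  have bij: "bij_betw sig {0..<n} {0..<n}"
    using run by (simp add: valid_run_def)
  then have all_zero: "formed 0 sig b n j = 0" if "j < n" for j
    using that bij_betw_imp_surj_on[OF bij] by (auto simp: formed_def)
  define c where "c = real (card {j \<in> {0..<n}. j mod 3 = 0})"
  have "4 * real n / 9 * (real n - 2) \<le> 4 * real n / 9 * (3 * c)"
    using card_residue_class_3_approx[of 0 n] unfolding c_def by (intro mult_left_mono) auto
  then have "4/9 * real n^2 - real n \<le> 4 * real n / 3 * c"
    by (simp add: power2_eq_square algebra_simps)
  also have "\<dots> = (\<Sum>j<n. tight_potential n j (formed 0 sig b n j))"
    using sum_tight_potential_shared[of 0 n] all_zero unfolding c_def by simp
  finally have potential: "4/9 * real n^2 - real n \<le> (\<Sum>j<n. tight_potential n j (formed 0 sig b n j))" .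
  have "{j \<in> {0..<n}. formed 0 sig b n j = 0} = {0..<n}"
    using all_zero by auto
  then have "cnt n (formed 0 sig b n) 0 = n"
    by (simp add: cnt_def)
  then have "real n^2 \<le> (\<Sum>v\<in>tight_values n. real (cnt n (formed 0 sig b n) v)^2)"
    using member_le_sum[of 0 "tight_values n" "\<lambda>v. real (cnt n (formed 0 sig b n) v)^2"]
    by (simp add: tight_values_def)
  with potential show ?thesis
    by (simp add: score_def)
qed

lemma score_tight_alpha_pass_approx:
  assumes "alpha_pass_output n (tight_values n) (tight_potential n) 1 x"
  shows "\<bar>score n (tight_values n) (tight_potential n) 1 x - 13/9 * real n^2\<bar> \<le> 5 * real n"
proof -
  obtain sigs bs where runs: "\<forall>a\<in>tight_values n. valid_run n (tight_values n) (tight_potential n) a (sigs a) (bs a)"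
    and x: "x \<in> candidates n (tight_values n) sigs bs"
    and best: "\<forall>y\<in>candidates n (tight_values n) sigs bs.
      score n (tight_values n) (tight_potential n) 1 y \<le> score n (tight_values n) (tight_potential n) 1 x"
    using assms unfolding alpha_pass_output_def by blast
  from x obtain a k where a: "a \<in> tight_values n" and k: "1 \<le> k" "k \<le> n"
    and x_eq: "x = formed a (sigs a) (bs a) k"
    unfolding candidates_def by auto
  have upper: "score n (tight_values n) (tight_potential n) 1 x \<le> 13/9 * real n^2 + 4 * real n + 1"
    unfolding x_eq using runs a k by (intro score_tight_candidate_le) auto
  have zero: "0 \<in> tight_values n"
    by (simp add: tight_values_def)
  then have "formed 0 (sigs 0) (bs 0) n \<in> candidates n (tight_values n) sigs bs"
    unfolding candidates_def using k by (intro CollectI exI[of _ 0] exI[of _ n] conjI refl) auto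
  then have "13/9 * real n^2 - real n \<le> score n (tight_values n) (tight_potential n) 1 x"
    using best score_tight_all_zero_ge[of n "sigs 0" "bs 0"] runs zero by fastforce
  with upper k show ?thesis
    by (simp add: abs_le_iff)
qed

lemma opt_tight_ge: "5/3 * real n^2 \<le> opt n (tight_values n) (tight_potential n) 1"
proof -
  define x where "x = restrict (\<lambda>j. j mod 3) {0..<n}"
  have x: "x \<in> {0..<n} \<rightarrow>\<^sub>E tight_values n"
    using mod_less_divisor[of 3] by (fastforce simp: x_def tight_values_def)
  have "tight_potential n j (x j) = 4 * real n / 3" if "j < n" for j
    using that mod_less_divisor[of 3 j] by (simp add: x_def tight_potential_def)
  then have "(\<Sum>j<n. tight_potential n j (x j)) = (\<Sum>j<n. 4 * real n / 3)"
    by (intro sum.cong) auto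
  then have "(\<Sum>j<n. tight_potential n j (x j)) = 4/3 * real n^2"
    by (simp add: power2_eq_square)
  moreover have "real n^2 / 3 \<le> (\<Sum>v\<in>tight_values n. real (cnt n x v)^2)"
  proof -
    have "real n = (\<Sum>v<3. real (cnt n x v))"
      using sum_cnt[of "{..<3}" n x] by (simp add: x_def flip: of_nat_sum)
    then have "real n^2 \<le> (\<Sum>v<3. real (cnt n x v)^2) * 3"
      using sum_squared_le_sum_of_squares[of "\<lambda>v. real (cnt n x v)" "{..<3}"] by simp
    also have "\<dots> \<le> (\<Sum>v\<in>tight_values n. real (cnt n x v)^2) * 3"
      by (intro mult_right_mono sum_mono2) (auto simp: tight_values_def)
    finally show ?thesis by simp
  qed
  ultimately have "5/3 * real n^2 \<le> score n (tight_values n) (tight_potential n) 1 x"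
    by (simp add: score_def)
  also have "\<dots> \<le> opt n (tight_values n) (tight_potential n) 1"
    unfolding opt_def using x by (intro Max_ge finite_imageI finite_PiE) auto
  finally show ?thesis .
qed

lemma score_tight_le:
  assumes n: "1 \<le> n" and x: "\<forall>j<n. x j \<in> tight_values n"
  shows "score n (tight_values n) (tight_potential n) 1 x \<le> 5/3 * real n^2 + 5 * real n + 5"
proof -
  have "Max (cnt n x ` tight_values n) \<in> cnt n x ` tight_values n"
    by (intro Max_in) (auto simp: tight_values_def lessThan_empty_iff)
  then obtain v0 where v0: "v0 \<in> tight_values n" "cnt n x v0 = Max (cnt n x ` tight_values n)"
    by auto
  then have v0_max: "cnt n x v \<le> cnt n x v0" if "v \<in> tight_values n" for v
    using that by simp
  define m where "m = cnt n x v0"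
  define T where "T = {j \<in> {..<n}. x j = v0}"
  have T: "T \<subseteq> {..<n}" "card T = m"
    by (auto simp: T_def m_def cnt_def atLeast0LessThan)
  then have "m \<le> n"
    using card_mono[of "{..<n}" T] by simp
  have split: "(\<Sum>j<n. tight_potential n j (x j)) =
      (\<Sum>j\<in>T. tight_potential n j v0) + (\<Sum>j\<in>{..<n} - T. tight_potential n j (x j))"
    unfolding sum.subset_diff[OF T(1) finite_lessThan] by (simp add: T_def add.commute)
  have "(\<Sum>j\<in>T. tight_potential n j v0) \<le> real (card T) * (4 * real n / 3 + 1)"
    by (rule sum_bounded_above) (rule tight_potential_le)
  then have on_T: "(\<Sum>j\<in>T. tight_potential n j v0) \<le> (4 * real n / 3 + 1) * real m"
    using T(2) by (simp add: mult.commute)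
  have "(\<Sum>j\<in>T. tight_potential n j v0) \<le> (\<Sum>j<n. tight_potential n j v0)"
    using T by (intro sum_mono2) (auto simp: tight_potential_nonneg)
  then have on_T': "(\<Sum>j\<in>T. tight_potential n j v0) \<le> (4 * real n / 3 + 1) * ((real n + 2) / 3)"
    using sum_tight_potential_le[OF n, of v0] by linarith
  have "(\<Sum>j\<in>{..<n} - T. tight_potential n j (x j)) \<le> real (card ({..<n} - T)) * (4 * real n / 3 + 1)"
    by (rule sum_bounded_above) (rule tight_potential_le)
  then have off_T: "(\<Sum>j\<in>{..<n} - T. tight_potential n j (x j)) \<le> (4 * real n / 3 + 1) * (real n - real m)"
    using T \<open>m \<le> n\<close> by (simp add: card_Diff_subset finite_subset mult.commute)
  have "(\<Sum>v\<in>tight_values n. real (cnt n x v)^2) \<le> real m^2 + real m * (real n - real m)"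
    using sum_cnt_sq_le[OF finite_tight_values x v0(1)] v0_max unfolding m_def by blast
  then have counts: "(\<Sum>v\<in>tight_values n. real (cnt n x v)^2) \<le> real m * real n"
    by (simp add: power2_eq_square algebra_simps)
  have "0 \<le> real m" "real m \<le> real n"
    using \<open>m \<le> n\<close> by simp_all
  from assignment_score_arith[OF this on_T on_T' off_T counts] show ?thesis
    unfolding score_def split by simp
qed

lemma opt_tight_le:
  assumes "1 \<le> n"
  shows "opt n (tight_values n) (tight_potential n) 1 \<le> 5/3 * real n^2 + 5 * real n + 5"
  unfolding opt_def
proof (rule Max.boundedI)
  show "finite (score n (tight_values n) (tight_potential n) 1 ` ({0..<n} \<rightarrow>\<^sub>E tight_values n))"
    by (intro finite_imageI finite_PiE) auto
  show "score n (tight_values n) (tight_potential n) 1 ` ({0..<n} \<rightarrow>\<^sub>E tight_values n) \<noteq> {}"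
    by (auto simp: PiE_eq_empty_iff tight_values_def lessThan_empty_iff)
qed (use score_tight_le[OF assms] in \<open>auto simp: PiE_def Pi_def\<close>)

lemma opt_tight_approx:
  assumes "1 \<le> n"
  shows "\<bar>opt n (tight_values n) (tight_potential n) 1 - 5/3 * real n^2\<bar> \<le> 10 * real n"
  using opt_tight_ge[of n] opt_tight_le[OF assms] assms by (simp add: abs_le_iff)

theorem theorem5:
  shows "\<exists>(V :: nat \<Rightarrow> nat set) (psi :: nat \<Rightarrow> nat \<Rightarrow> nat \<Rightarrow> real).
    (\<forall>n. finite (V n) \<and> card (V n) \<ge> 2 \<and> (\<forall>j<n. \<forall>v\<in>V n. psi n j v \<ge> 0)) \<and>
    (\<forall>n\<ge>1. \<exists>x. alpha_pass_output n (V n) (psi n) 1 x) \<and>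
    (\<forall>xhat :: nat \<Rightarrow> nat \<Rightarrow> nat.
       (\<forall>n\<ge>1. alpha_pass_output n (V n) (psi n) 1 (xhat n)) \<longrightarrow>
       (\<lambda>n. score n (V n) (psi n) 1 (xhat n) / opt n (V n) (psi n) 1) \<longlonglongrightarrow> 13 / 15)"
proof (intro exI[of _ tight_values] exI[of _ tight_potential] conjI)
  show "\<forall>n. finite (tight_values n) \<and> 2 \<le> card (tight_values n) \<and>
      (\<forall>j<n. \<forall>v\<in>tight_values n. 0 \<le> tight_potential n j v)"
    by (simp add: card_tight_values tight_potential_nonneg)
  show "\<forall>n\<ge>1. \<exists>x. alpha_pass_output n (tight_values n) (tight_potential n) 1 x"
    using alpha_pass_output_exists[OF finite_tight_values] by (simp add: card_tight_values)
  show "\<forall>xhat. (\<forall>n\<ge>1. alpha_pass_output n (tight_values n) (tight_potential n) 1 (xhat n)) \<longrightarrow>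
      (\<lambda>n. score n (tight_values n) (tight_potential n) 1 (xhat n) / opt n (tight_values n) (tight_potential n) 1)
        \<longlonglongrightarrow> 13 / 15"
  proof (intro allI impI)
    fix xhat :: "nat \<Rightarrow> nat \<Rightarrow> nat"
    assume out: "\<forall>n\<ge>1. alpha_pass_output n (tight_values n) (tight_potential n) 1 (xhat n)"
    have "\<forall>n\<ge>1. \<bar>score n (tight_values n) (tight_potential n) 1 (xhat n) - 13/9 * real n^2\<bar> \<le> 5 * real n"
      using out score_tight_alpha_pass_approx by blast
    moreover have "\<forall>n\<ge>1. \<bar>opt n (tight_values n) (tight_potential n) 1 - 5/3 * real n^2\<bar> \<le> 10 * real n"
      using opt_tight_approx by blast
    ultimately have "(\<lambda>n. score n (tight_values n) (tight_potential n) 1 (xhat n) / opt n (tight_values n) (tight_potential n) 1)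
        \<longlonglongrightarrow> (13/9) / (5/3)"
      by (rule tendsto_ratio_of_near_quadratics) simp
    then show "(\<lambda>n. score n (tight_values n) (tight_potential n) 1 (xhat n) / opt n (tight_values n) (tight_potential n) 1)
        \<longlonglongrightarrow> 13 / 15"
      by simp
  qed
qed

end
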